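(* Let $G$ be a fixed connected simple undirected graph on $N\ge2$ nodes, $D=\max_i|N_i|$, and consider the system on $G$ with noise level $\eta\in(1-2/D,\,1]$. Then in the Markov chain of states $x(k)\in\{\pm1\}^N$, the states $+N$ (all $+1$) and $-N$ (all $-1$) are absorbing, and every other state is transient.
   Context: Nodes $V=\{1,\dots,N\}$ with values $x_i(k)\in\{+1,-1\}$. The neighborhood $N_i$ of node $i$ consists of $i$ and all nodes adjacent to $i$. With $v_i(k)=\frac{1}{|N_i|}\sum_{j\in N_i}x_j(k)$, the update is $x_i(k+1)=\operatorname{sign}[v_i(k)+\xi_i(k)]$, where $\xi_i(k)$ are i.i.d. uniform on $[-\eta,\eta]$ across $i$ and $k$, independent of $x(0)$. A state is absorbing if its one-step transition probability to itself is one; it is transient if, starting from it, it reappears with probability strictly less than one. *)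

theory Defs
  imports "HOL-Analysis.Analysis" "HOL-Library.FuncSet"
begin

text \<open>Nodes are 0,...,N-1 (a relabelling of 1,...,N). The graph is given by an
adjacency relation E on the node set.\<close>

definition simple_graph :: "nat \<Rightarrow> (nat \<Rightarrow> nat \<Rightarrow> bool) \<Rightarrow> bool" where
  "simple_graph N E \<longleftrightarrow> (\<forall>i<N. \<forall>j<N. E i j \<longleftrightarrow> E j i) \<and> (\<forall>i<N. \<not> E i i)"

definition connected_graph :: "nat \<Rightarrow> (nat \<Rightarrow> nat \<Rightarrow> bool) \<Rightarrow> bool" where
  "connected_graph N E \<longleftrightarrow>
     (\<forall>i<N. \<forall>j<N. (\<lambda>a b. a < N \<and> b < N \<and> E a b)\<^sup>*\<^sup>* i j)"

definition nbhd :: "nat \<Rightarrow> (nat \<Rightarrow> nat \<Rightarrow> bool) \<Rightarrow> nat \<Rightarrow> nat set" where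
  "nbhd N E i = {j. j < N \<and> (j = i \<or> E i j)}"

definition max_deg :: "nat \<Rightarrow> (nat \<Rightarrow> nat \<Rightarrow> bool) \<Rightarrow> nat" where
  "max_deg N E = Max ((\<lambda>i. card (nbhd N E i)) ` {..<N})"

definition states :: "nat \<Rightarrow> (nat \<Rightarrow> real) set" where
  "states N = {..<N} \<rightarrow>\<^sub>E {-1, 1}"

definition all_plus :: "nat \<Rightarrow> (nat \<Rightarrow> real)" where
  "all_plus N = (\<lambda>i. if i < N then 1 else undefined)"

definition all_minus :: "nat \<Rightarrow> (nat \<Rightarrow> real)" where
  "all_minus N = (\<lambda>i. if i < N then -1 else undefined)"

definition local_avg :: "nat \<Rightarrow> (nat \<Rightarrow> nat \<Rightarrow> bool) \<Rightarrow> (nat \<Rightarrow> real) \<Rightarrow> nat \<Rightarrow> real" where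
  "local_avg N E x i = (\<Sum>j\<in>nbhd N E i. x j) / real (card (nbhd N E i))"

definition noise :: "real \<Rightarrow> real measure" where
  "noise eta = uniform_measure lborel {-eta..eta}"

text \<open>One-step transition probability: the noises xi_i are independent, and
x_i(k+1) = sign(v_i(k) + xi_i(k)).\<close>
definition trans_prob ::
  "nat \<Rightarrow> (nat \<Rightarrow> nat \<Rightarrow> bool) \<Rightarrow> real \<Rightarrow> (nat \<Rightarrow> real) \<Rightarrow> (nat \<Rightarrow> real) \<Rightarrow> real" where
  "trans_prob N E eta x y =
     (\<Prod>i<N. measure (noise eta) {\<xi>. sgn (local_avg N E x i + \<xi>) = y i})"

text \<open>First-passage probabilities: first_passage n y x = probability that the chain
started at y visits x for the first time (at times \<ge> 1) at time n.\<close>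
fun first_passage ::
  "nat \<Rightarrow> (nat \<Rightarrow> nat \<Rightarrow> bool) \<Rightarrow> real \<Rightarrow> nat \<Rightarrow> (nat \<Rightarrow> real) \<Rightarrow> (nat \<Rightarrow> real) \<Rightarrow> real" where
  "first_passage N E eta 0 y x = 0"
| "first_passage N E eta (Suc 0) y x = trans_prob N E eta y x"
| "first_passage N E eta (Suc (Suc n)) y x =
     (\<Sum>z\<in>states N - {x}. trans_prob N E eta y z * first_passage N E eta (Suc n) z x)"

definition return_prob ::
  "nat \<Rightarrow> (nat \<Rightarrow> nat \<Rightarrow> bool) \<Rightarrow> real \<Rightarrow> (nat \<Rightarrow> real) \<Rightarrow> real" where
  "return_prob N E eta x = (\<Sum>n. first_passage N E eta (Suc n) x x)"

definition absorbing ::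
  "nat \<Rightarrow> (nat \<Rightarrow> nat \<Rightarrow> bool) \<Rightarrow> real \<Rightarrow> (nat \<Rightarrow> real) \<Rightarrow> bool" where
  "absorbing N E eta x \<longleftrightarrow> trans_prob N E eta x x = 1"

definition transient ::
  "nat \<Rightarrow> (nat \<Rightarrow> nat \<Rightarrow> bool) \<Rightarrow> real \<Rightarrow> (nat \<Rightarrow> real) \<Rightarrow> bool" where
  "transient N E eta x \<longleftrightarrow> return_prob N E eta x < 1"

end

theory Submission
  imports Defs "HOL-Probability.Probability"
begin

(* Absorption: at a consensus state every local average equals the common value c = +-1,
   and since the noise lives in [-eta, eta] with eta <= 1, sign(c + xi) = c almost surely.
   Transience: call the +1-nodes of a state its plus set.  The "spread" of a state y sets
   exactly those nodes to +1 that have a +1 node in their closed neighbourhood.  Because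
   eta > 1 - 2/D, a single +1 neighbour already lifts the local average above -eta, so the
   chain jumps from y to its spread with positive probability; by connectivity the plus set
   strictly grows unless y is all-plus.  Hence from any x other than the two consensus states
   the chain reaches the absorbing all-plus state through states with ever larger plus sets,
   never revisiting x, with probability at least p^N > 0.  Formally this is a potential
   argument: a function q <= 1 with q y <= sum over z <> x of P(y,z) q(z) bounds the return
   probability to x by 1 - q x. *)

section \<open>The noise distribution\<close>

lemma noise_prob_space: "eta > 0 \<Longrightarrow> prob_space (noise eta)"
  unfolding noise_def by (rule prob_space_uniform_measure) (auto simp: emeasure_lborel_Icc_eq)

lemma measure_noise:
  assumes "eta > 0" and "B \<in> sets borel"
  shows "measure (noise eta) B = measure lborel ({-eta..eta} \<inter> B) / (2 * eta)"
  using assms unfolding noise_def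
  by (subst measure_uniform_measure) (auto simp: emeasure_lborel_Icc_eq)

lemma sgn_plus_set: "{\<xi>::real. sgn (v + \<xi>) = 1} = {-v<..}"
  by (auto simp: sgn_real_def split: if_splits)

lemma sgn_minus_set: "{\<xi>::real. sgn (v + \<xi>) = -1} = {..< -v}"
  by (auto simp: sgn_real_def split: if_splits)

text \<open>The noisy sign is almost surely \<open>\<plusminus>1\<close>: the tie \<open>v + \<xi> = 0\<close> is a null event.\<close>
lemma noise_sign_total:
  assumes "eta > 0"
  shows "measure (noise eta) {\<xi>. sgn (v + \<xi>) = 1} + measure (noise eta) {\<xi>. sgn (v + \<xi>) = -1} = 1"
proof -
  interpret prob_space "noise eta" using noise_prob_space[OF assms] .
  have space: "space (noise eta) = UNIV" and events: "sets (noise eta) = sets borel"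
    by (simp_all add: noise_def)
  have tie: "prob {-v} = 0"
    using assms by (cases "-v \<in> {-eta..eta}") (auto simp: measure_noise Int_insert_right)
  have "prob {-v<..} = 1 - prob {..-v}"
    using prob_compl[of "{..-v}"] by (simp add: space events Compl_eq_Diff_UNIV[symmetric])
  moreover have "prob {..-v} = prob {..< -v} + prob {-v}"
    using finite_measure_Union[of "{..< -v}" "{-v}"] by (simp add: events ivl_disj_un(2)[symmetric])
  ultimately show ?thesis using tie by (simp add: sgn_plus_set sgn_minus_set)
qed

lemma noise_sign_plus_pos:
  assumes "eta > 0" "v > -eta"
  shows "measure (noise eta) {\<xi>. sgn (v + \<xi>) = 1} > 0"
proof -
  define c where "c = max (-v) (-eta)"
  have "measure lborel {c<..eta} \<le> measure lborel ({-eta..eta} \<inter> {-v<..})"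
    by (rule measure_mono_fmeasurable)
       (auto simp: c_def intro!: fmeasurable_Int_fmeasurable[OF fmeasurable_compact])
  moreover have "measure lborel {c<..eta} = eta - c" and "eta - c > 0"
    using assms by (simp_all add: c_def)
  ultimately show ?thesis using assms by (simp add: measure_noise sgn_plus_set)
qed

lemma noise_sign_minus_pos:
  assumes "eta > 0" "v < eta"
  shows "measure (noise eta) {\<xi>. sgn (v + \<xi>) = -1} > 0"
proof -
  define c where "c = min (-v) eta"
  have "measure lborel {-eta..<c} \<le> measure lborel ({-eta..eta} \<inter> {..< -v})"
    by (rule measure_mono_fmeasurable)
       (auto simp: c_def intro!: fmeasurable_Int_fmeasurable[OF fmeasurable_compact])
  moreover have "measure lborel {-eta..<c} = c + eta" and "c + eta > 0"
    using assms by (simp_all add: c_def)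
  ultimately show ?thesis using assms by (simp add: measure_noise sgn_minus_set)
qed

lemma noise_sign_certain:
  assumes "eta > 0"
  shows "v \<ge> eta \<Longrightarrow> measure (noise eta) {\<xi>. sgn (v + \<xi>) = 1} = 1"
    and "v \<le> -eta \<Longrightarrow> measure (noise eta) {\<xi>. sgn (v + \<xi>) = -1} = 1"
proof -
  assume "v \<ge> eta"
  then have "{-eta..eta} \<inter> {..< -v} = {}" using assms by auto
  then show "measure (noise eta) {\<xi>. sgn (v + \<xi>) = 1} = 1"
    using noise_sign_total[OF assms, of v] assms by (simp add: measure_noise sgn_minus_set)
next
  assume "v \<le> -eta"
  then have "{-eta..eta} \<inter> {-v<..} = {}" using assms by auto
  then show "measure (noise eta) {\<xi>. sgn (v + \<xi>) = -1} = 1"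
    using noise_sign_total[OF assms, of v] assms by (simp add: measure_noise sgn_plus_set)
qed

lemma finite_states: "finite (states N)"
  unfolding states_def by (auto intro: finite_PiE)

lemma trans_prob_nonneg: "0 \<le> trans_prob N E eta y z"
  unfolding trans_prob_def by (intro prod_nonneg) auto

lemma trans_prob_le_1: "eta > 0 \<Longrightarrow> trans_prob N E eta y z \<le> 1"
  using prob_space.prob_le_1[OF noise_prob_space]
  unfolding trans_prob_def by (intro prod_le_1) auto

text \<open>The kernel is stochastic: the independent coordinates factorise the sum over states.\<close>
lemma trans_prob_stochastic:
  assumes "eta > 0"
  shows "(\<Sum>z\<in>states N. trans_prob N E eta y z) = 1"
proof -
  have "(\<Sum>z\<in>states N. trans_prob N E eta y z) =
     (\<Prod>i<N. \<Sum>c\<in>{-1,1}. measure (noise eta) {\<xi>. sgn (local_avg N E y i + \<xi>) = c})"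
    unfolding states_def trans_prob_def by (subst prod_sum_PiE) auto
  also have "\<dots> = (\<Prod>i<N. (1::real))"
  proof (rule prod.cong)
    fix i
    show "(\<Sum>c\<in>{-1,1}. measure (noise eta) {\<xi>. sgn (local_avg N E y i + \<xi>) = c}) = 1"
      using noise_sign_total[OF assms, of "local_avg N E y i"] by simp
  qed simp
  finally show ?thesis by simp
qed

lemma first_passage_nonneg: "0 \<le> first_passage N E eta n y x"
  by (induction N E eta n y x rule: first_passage.induct)
     (auto simp: trans_prob_nonneg intro!: sum_nonneg mult_nonneg_nonneg)

lemma first_passage_partial_sum_bound:
  assumes eta: "eta > 0" and x: "x \<in> states N"
    and q_le_1: "\<And>y. q y \<le> 1"
    and q_sub: "\<And>y. q y \<le> (\<Sum>z\<in>states N - {x}. trans_prob N E eta y z * q z)"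
  shows "(\<Sum>k<n. first_passage N E eta (Suc k) y x) \<le> 1 - q y"
proof (induction n arbitrary: y)
  case 0
  then show ?case using q_le_1[of y] by simp
next
  case (Suc n)
  let ?P = "trans_prob N E eta"
  have "(\<Sum>k<Suc n. first_passage N E eta (Suc k) y x) =
      ?P y x + (\<Sum>k<n. first_passage N E eta (Suc (Suc k)) y x)"
    by (subst sum.lessThan_Suc_shift) simp
  also have "(\<Sum>k<n. first_passage N E eta (Suc (Suc k)) y x) =
      (\<Sum>z\<in>states N - {x}. ?P y z * (\<Sum>k<n. first_passage N E eta (Suc k) z x))"
    by (simp add: sum_distrib_left sum.swap[of _ "{..<n}"])
  also have "\<dots> \<le> (\<Sum>z\<in>states N - {x}. ?P y z * (1 - q z))"
    by (intro sum_mono mult_left_mono Suc.IH trans_prob_nonneg)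
  also have "\<dots> = (\<Sum>z\<in>states N - {x}. ?P y z) - (\<Sum>z\<in>states N - {x}. ?P y z * q z)"
    by (simp add: algebra_simps sum_subtractf)
  also have "(\<Sum>z\<in>states N - {x}. ?P y z) = 1 - ?P y x"
    using sum.remove[OF finite_states x, of "?P y"] trans_prob_stochastic[OF eta, of N E y] by simp
  finally show ?case using q_sub[of y] by simp
qed

lemma return_prob_bound:
  assumes "eta > 0" and "x \<in> states N"
    and "\<And>y. q y \<le> 1"
    and "\<And>y. q y \<le> (\<Sum>z\<in>states N - {x}. trans_prob N E eta y z * q z)"
  shows "return_prob N E eta x \<le> 1 - q x"
proof -
  have "summable (\<lambda>n. first_passage N E eta (Suc n) x x)"
    by (rule summableI_nonneg_bounded[where x = "1 - q x"])
       (auto simp: first_passage_nonneg intro: first_passage_partial_sum_bound[OF assms])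
  then show ?thesis
    unfolding return_prob_def
    by (rule suminf_le_const) (rule first_passage_partial_sum_bound[OF assms])
qed

lemma nbhd_finite: "finite (nbhd N E i)"
  unfolding nbhd_def by auto

lemma nbhd_subset: "nbhd N E i \<subseteq> {..<N}"
  unfolding nbhd_def by auto

lemma self_in_nbhd: "i < N \<Longrightarrow> i \<in> nbhd N E i"
  unfolding nbhd_def by auto

lemma card_nbhd_pos: "i < N \<Longrightarrow> card (nbhd N E i) > 0"
  using self_in_nbhd nbhd_finite by (metis card_gt_0_iff empty_iff)

lemma card_nbhd_le_max_deg: "i < N \<Longrightarrow> card (nbhd N E i) \<le> max_deg N E"
  unfolding max_deg_def by (rule Max_ge) auto

text \<open>In a connected simple graph with at least two nodes, node 0 has a neighbour, so its
  closed neighbourhood has at least two elements; this makes the noise range nonempty.\<close>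
lemma max_deg_ge_2:
  assumes "N \<ge> 2" "simple_graph N E" "connected_graph N E"
  shows "max_deg N E \<ge> 2"
proof -
  have "(\<lambda>a b. a < N \<and> b < N \<and> E a b)\<^sup>*\<^sup>* 0 1"
    using assms(1,3) unfolding connected_graph_def by simp
  then obtain b where b: "b < N" "E 0 b"
    by (metis (no_types, lifting) converse_rtranclpE zero_neq_one)
  moreover have "\<not> E 0 0" using assms(1,2) unfolding simple_graph_def by simp
  ultimately have "b \<noteq> 0" by metis
  with b have "{0, b} \<subseteq> nbhd N E 0" unfolding nbhd_def by auto
  then have "card {0, b} \<le> card (nbhd N E 0)" by (intro card_mono nbhd_finite)
  then show ?thesis using card_nbhd_le_max_deg[of 0 N E] assms(1) \<open>b \<noteq> 0\<close> by simp
qed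

lemma local_avg_const: "i < N \<Longrightarrow> (\<And>j. j < N \<Longrightarrow> y j = c) \<Longrightarrow> local_avg N E y i = c"
  using card_nbhd_pos[of i N E] nbhd_subset[of N E i]
  unfolding local_avg_def by (subst sum.cong[OF refl, of _ _ "\<lambda>_. c"]) auto

lemma state_values: "y \<in> states N \<Longrightarrow> j < N \<Longrightarrow> y j = 1 \<or> y j = -1"
  unfolding states_def by auto

lemma local_avg_one_plus:
  assumes y: "y \<in> states N" and j0: "j0 \<in> nbhd N E i" "y j0 = 1" and i: "i < N"
  shows "local_avg N E y i \<ge> 2 / real (card (nbhd N E i)) - 1"
proof -
  let ?n = "real (card (nbhd N E i))"
  have "y j + 1 \<ge> 0" if "j \<in> nbhd N E i" for j
    using state_values[OF y, of j] that nbhd_subset by force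
  then have "y j0 + 1 \<le> (\<Sum>j\<in>nbhd N E i. y j + 1)"
    using j0(1) by (intro member_le_sum nbhd_finite) auto
  then have "2 - ?n \<le> (\<Sum>j\<in>nbhd N E i. y j)"
    using j0(2) by (simp add: sum.distrib)
  moreover have "?n > 0" using card_nbhd_pos[OF i] by simp
  ultimately have "(2 - ?n) / ?n \<le> local_avg N E y i"
    unfolding local_avg_def by (intro divide_right_mono) auto
  moreover have "(2 - ?n) / ?n = 2 / ?n - 1" using \<open>?n > 0\<close> by (simp add: field_simps)
  ultimately show ?thesis by simp
qed

lemma local_avg_no_plus:
  assumes "y \<in> states N" "\<forall>j\<in>nbhd N E i. y j \<noteq> 1" "i < N"
  shows "local_avg N E y i = -1"
proof -
  have "(\<Sum>j\<in>nbhd N E i. y j) = (\<Sum>j\<in>nbhd N E i. -1)"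
    using assms state_values nbhd_subset by (intro sum.cong) blast+
  then show ?thesis
    using card_nbhd_pos[OF assms(3)] unfolding local_avg_def by simp
qed

section \<open>Absorption of the consensus states\<close>

lemma consensus_absorbing:
  assumes "0 < eta" "eta \<le> 1" and c: "c = 1 \<or> c = -1"
  shows "absorbing N E eta (\<lambda>i. if i < N then c else undefined)"
  unfolding absorbing_def trans_prob_def
proof (rule prod.neutral, rule ballI)
  fix i assume "i \<in> {..<N}"
  then have "local_avg N E (\<lambda>i. if i < N then c else undefined) i = c"
    by (intro local_avg_const) auto
  with \<open>i \<in> {..<N}\<close> c assms(1,2) noise_sign_certain[OF assms(1), of c]
  show "measure (noise eta) {\<xi>. sgn (local_avg N E (\<lambda>i. if i < N then c else undefined) i + \<xi>) =
          (if i < N then c else undefined)} = 1"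
    by auto
qed

lemma all_plus_absorbing: "0 < eta \<Longrightarrow> eta \<le> 1 \<Longrightarrow> absorbing N E eta (all_plus N)"
  unfolding all_plus_def by (rule consensus_absorbing) auto

lemma all_minus_absorbing: "0 < eta \<Longrightarrow> eta \<le> 1 \<Longrightarrow> absorbing N E eta (all_minus N)"
  unfolding all_minus_def by (rule consensus_absorbing) auto

section \<open>Plus sets and the spread map\<close>

definition plus_nodes :: "nat \<Rightarrow> (nat \<Rightarrow> real) \<Rightarrow> nat set" where
  "plus_nodes N y = {i. i < N \<and> y i = 1}"

definition spread :: "nat \<Rightarrow> (nat \<Rightarrow> nat \<Rightarrow> bool) \<Rightarrow> (nat \<Rightarrow> real) \<Rightarrow> (nat \<Rightarrow> real)" where
  "spread N E y = (\<lambda>i. if i < N then (if \<exists>j\<in>nbhd N E i. y j = 1 then 1 else -1) else undefined)"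

lemma plus_nodes_subset: "plus_nodes N y \<subseteq> {..<N}"
  unfolding plus_nodes_def by auto

lemma all_plus_in_states: "all_plus N \<in> states N"
  unfolding states_def all_plus_def by (auto simp: PiE_iff extensional_def)

lemma plus_nodes_full:
  assumes "y \<in> states N" "plus_nodes N y = {..<N}"
  shows "y = all_plus N"
  using assms unfolding states_def plus_nodes_def all_plus_def
  by (intro ext) (auto simp: PiE_iff extensional_def set_eq_iff)

lemma plus_nodes_empty:
  assumes "y \<in> states N" "plus_nodes N y = {}"
  shows "y = all_minus N"
  using assms unfolding states_def plus_nodes_def all_minus_def
  by (intro ext) (auto simp: PiE_iff extensional_def set_eq_iff)

lemma spread_in_states: "spread N E y \<in> states N"
  unfolding states_def spread_def by (auto simp: PiE_iff extensional_def)

lemma plus_nodes_spread_mono: "plus_nodes N y \<subseteq> plus_nodes N (spread N E y)"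
  unfolding plus_nodes_def spread_def using self_in_nbhd by auto

text \<open>In a connected graph the spread strictly enlarges a proper nonempty plus set: some edge
  joins a \<open>+1\<close> node to a \<open>-1\<close> node, and the latter becomes \<open>+1\<close>.\<close>
lemma plus_nodes_spread_grows:
  assumes graph: "simple_graph N E" "connected_graph N E"
    and y: "y \<in> states N" "plus_nodes N y \<noteq> {}" "y \<noteq> all_plus N"
  shows "plus_nodes N y \<subset> plus_nodes N (spread N E y)"
proof -
  let ?R = "\<lambda>a b. a < N \<and> b < N \<and> E a b"
  obtain i where i: "i < N" "y i = 1" using y(2) unfolding plus_nodes_def by auto
  obtain j where j: "j < N" "y j \<noteq> 1"
    using y plus_nodes_full plus_nodes_subset unfolding plus_nodes_def by blast
  have "\<exists>u v. ?R u v \<and> y u = 1 \<and> y v \<noteq> 1" if "?R\<^sup>*\<^sup>* i j"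
    using that i(2) j(2) by (induction rule: rtranclp_induct) auto
  then obtain u v where uv: "?R u v" "y u = 1" "y v \<noteq> 1"
    using graph(2) i j unfolding connected_graph_def by blast
  then have "u \<in> nbhd N E v"
    using graph(1) unfolding simple_graph_def nbhd_def by auto
  with uv have "v \<in> plus_nodes N (spread N E y) - plus_nodes N y"
    unfolding plus_nodes_def spread_def by auto
  then show ?thesis using plus_nodes_spread_mono by blast
qed

text \<open>Above the noise threshold, the chain moves from any state to its spread with
  positive probability: a node seeing a \<open>+1\<close> has local average \<open>> -eta\<close>, any other node has
  local average \<open>-1 < eta\<close>.\<close>
lemma trans_prob_spread_pos:
  assumes eta: "0 < eta" "1 - 2 / real (max_deg N E) < eta"
    and y: "y \<in> states N"
  shows "trans_prob N E eta y (spread N E y) > 0"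
  unfolding trans_prob_def
proof (rule prod_pos)
  fix i assume "i \<in> {..<N}"
  then have i: "i < N" by simp
  show "measure (noise eta) {\<xi>. sgn (local_avg N E y i + \<xi>) = spread N E y i} > 0"
  proof (cases "\<exists>j\<in>nbhd N E i. y j = 1")
    case True
    then obtain j0 where "j0 \<in> nbhd N E i" "y j0 = 1" by blast
    then have "local_avg N E y i \<ge> 2 / real (card (nbhd N E i)) - 1"
      using local_avg_one_plus[OF y _ _ i] by blast
    moreover have "2 / real (card (nbhd N E i)) \<ge> 2 / real (max_deg N E)"
    proof -
      have "0 < card (nbhd N E i)" "card (nbhd N E i) \<le> max_deg N E"
        using card_nbhd_pos[OF i] card_nbhd_le_max_deg[OF i] by auto
      then show ?thesis by (simp add: frac_le)
    qed
    ultimately have "local_avg N E y i > -eta" using eta(2) by linarith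
    then show ?thesis using noise_sign_plus_pos[OF eta(1)] True i unfolding spread_def by simp
  next
    case False
    then have "local_avg N E y i = -1" using local_avg_no_plus[OF y _ i] by blast
    then show ?thesis using noise_sign_minus_pos[OF eta(1), of "-1"] eta(1) False i
      unfolding spread_def by simp
  qed
qed

lemma uniform_spread_bound:
  assumes "0 < eta" "1 - 2 / real (max_deg N E) < eta"
  obtains p where "0 < p" "\<And>y. y \<in> states N \<Longrightarrow> p \<le> trans_prob N E eta y (spread N E y)"
proof
  let ?f = "\<lambda>y. trans_prob N E eta y (spread N E y)"
  have ne: "states N \<noteq> {}" using all_plus_in_states by blast
  show "0 < Min (?f ` states N)"
    using finite_states ne trans_prob_spread_pos[OF assms] by (subst Min_gr_iff) auto
  show "Min (?f ` states N) \<le> ?f y" if "y \<in> states N" for y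
    using finite_states that by (intro Min_le) auto
qed

section \<open>Transience by uniform escape\<close>

lemma power_step:
  fixes p :: real
  assumes "0 < p" "p \<le> 1" "A \<subset> B" "B \<subseteq> {..<N}"
  shows "p ^ (N - card A) \<le> p * p ^ (N - card B)"
proof -
  have "card A < card B" "card B \<le> N"
    using assms(3,4) finite_subset[OF assms(4)] by (auto intro: psubset_card_mono card_mono[of "{..<N}", simplified])
  then have "p ^ (N - card A) \<le> p ^ Suc (N - card B)"
    using assms(1,2) by (intro power_decreasing) auto
  then show ?thesis by simp
qed

text \<open>If from every state whose plus set contains that of \<open>x\<close> the chain can enlarge its plus set
  in one step with probability at least \<open>p > 0\<close>, then \<open>x \<noteq> all_plus\<close> is transient: the
  potential \<open>q y = p ^ (N - |plus set of y|)\<close> on such states (and \<open>0\<close> elsewhere) is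
  sub-harmonic for the chain killed at \<open>x\<close>, so the return probability is at most \<open>1 - q x < 1\<close>.\<close>
lemma transient_by_uniform_escape:
  assumes eta: "eta > 0" and x: "x \<in> states N" "x \<noteq> all_plus N"
    and absorb: "absorbing N E eta (all_plus N)"
    and p: "0 < p"
    and escape: "\<And>y. y \<in> states N \<Longrightarrow> plus_nodes N x \<subseteq> plus_nodes N y \<Longrightarrow> y \<noteq> all_plus N \<Longrightarrow>
       f y \<in> states N \<and> plus_nodes N y \<subset> plus_nodes N (f y) \<and> p \<le> trans_prob N E eta y (f y)"
  shows "transient N E eta x"
proof -
  let ?S = "states N" and ?P = "trans_prob N E eta" and ?pl = "plus_nodes N"
  define q where "q y = (if y \<in> ?S \<and> ?pl x \<subseteq> ?pl y then p ^ (N - card (?pl y)) else 0)" for y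
  have "p \<le> ?P x (f x)" using escape[OF x(1) order_refl x(2)] by blast
  then have p_le_1: "p \<le> 1" using trans_prob_le_1[OF eta, of N E x "f x"] by linarith
  have q_nonneg: "q y \<ge> 0" for y unfolding q_def using p by simp
  have q_le_1: "q y \<le> 1" for y unfolding q_def using p p_le_1 by (simp add: power_le_one)
  have term_le_sum: "?P y z * q z \<le> (\<Sum>z\<in>?S - {x}. ?P y z * q z)" if "z \<in> ?S - {x}" for y z
    using that finite_states q_nonneg trans_prob_nonneg
    by (intro member_le_sum mult_nonneg_nonneg) auto
  have q_sub: "q y \<le> (\<Sum>z\<in>?S - {x}. ?P y z * q z)" for y
  proof (cases "y \<in> ?S \<and> ?pl x \<subseteq> ?pl y")
    case False
    then have "q y = 0" unfolding q_def by (rule if_not_P)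
    then show ?thesis
      using finite_states q_nonneg trans_prob_nonneg by (simp add: sum_nonneg)
  next
    case y: True
    show ?thesis
    proof (cases "y = all_plus N")
      case True
      then have "q y = ?P y y * q y" and "y \<in> ?S - {x}"
        using absorb x(2) all_plus_in_states unfolding absorbing_def by auto
      then show ?thesis using term_le_sum by metis
    next
      case False
      with y escape have fy: "f y \<in> ?S" "?pl y \<subset> ?pl (f y)" "p \<le> ?P y (f y)" by blast+
      then have "f y \<in> ?S - {x}" and q_fy: "q (f y) = p ^ (N - card (?pl (f y)))"
        using y unfolding q_def by auto
      have "q y \<le> p * q (f y)"
        using power_step[OF p p_le_1 fy(2) plus_nodes_subset] y q_fy unfolding q_def by simp
      also have "\<dots> \<le> ?P y (f y) * q (f y)"
        using fy(3) q_nonneg by (rule mult_right_mono)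
      finally show ?thesis using term_le_sum[OF \<open>f y \<in> ?S - {x}\<close>, where y = y] by linarith
    qed
  qed
  have "return_prob N E eta x \<le> 1 - q x"
    by (rule return_prob_bound[OF eta x(1) q_le_1 q_sub])
  moreover have "q x > 0" unfolding q_def using x p by simp
  ultimately show ?thesis unfolding transient_def by simp
qed

theorem lemma1:
  fixes N :: nat and E :: "nat \<Rightarrow> nat \<Rightarrow> bool" and eta :: real
  assumes "N \<ge> 2"
    and "simple_graph N E"
    and "connected_graph N E"
    and "1 - 2 / real (max_deg N E) < eta" and "eta \<le> 1"
  shows "absorbing N E eta (all_plus N) \<and> absorbing N E eta (all_minus N) \<and>
         (\<forall>x \<in> states N - {all_plus N, all_minus N}. transient N E eta x)"
proof -
  have "2 / real (max_deg N E) \<le> 1" using max_deg_ge_2[OF assms(1-3)] by simp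
  then have eta: "0 < eta" using assms(4) by linarith
  obtain p where p: "0 < p" "\<And>y. y \<in> states N \<Longrightarrow> p \<le> trans_prob N E eta y (spread N E y)"
    using uniform_spread_bound[OF eta assms(4)] by blast
  have "transient N E eta x" if x: "x \<in> states N - {all_plus N, all_minus N}" for x
  proof (rule transient_by_uniform_escape[OF eta _ _ all_plus_absorbing[OF eta assms(5)] p(1)])
    fix y assume y: "y \<in> states N" "plus_nodes N x \<subseteq> plus_nodes N y" "y \<noteq> all_plus N"
    have "plus_nodes N x \<noteq> {}" using x plus_nodes_empty by blast
    with y have "plus_nodes N y \<noteq> {}" by blast
    with y show "spread N E y \<in> states N \<and> plus_nodes N y \<subset> plus_nodes N (spread N E y) \<and>
        p \<le> trans_prob N E eta y (spread N E y)"
      using spread_in_states plus_nodes_spread_grows[OF assms(2,3)] p(2) by blast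
  qed (use x in auto)
  then show ?thesis
    using all_plus_absorbing[OF eta assms(5)] all_minus_absorbing[OF eta assms(5)] by blast
qed

end
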